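(* Let $r\ge 3$ and let $G=K_{n_1,\dots,n_r}$ be a complete $r$-partite graph (all $n_i\ge 1$) of order $n=n_1+\dots+n_r$. Then $\chi_{ei}(G)=1$ if $r=3$ and $G=K_{1,1,1}$; $\chi_{ei}(G)=n-1$ if $r=3$, $n\ge 4$ and $G\in\{K_{n-2,1,1},K_{1,n-2,1},K_{1,1,n-2}\}$; and $\chi_{ei}(G)=n$ otherwise.
   Context: All graphs are finite and simple. A complete $r$-partite graph $K_{n_1,\dots,n_r}$ has its vertex set partitioned into $r$ independent sets of sizes $n_1,\dots,n_r$, with two vertices adjacent if and only if they lie in different parts. A path $P_4$ in $G$ is a sequence $uxyv$ of four distinct vertices with $ux,xy,yv\in E(G)$; $u,v$ are its end vertices. An $e$-injective $k$-coloring of $G$ is a function $f:V(G)\to\{1,\dots,k\}$ with $f(u)\ne f(v)$ whenever $u,v$ are the end vertices of some path $P_4$ in $G$; $\chi_{ei}(G)$ is the least such $k$. *)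

theory Defs
  imports Main
begin

text \<open>A simple graph is given by a vertex set V and a symmetric irreflexive
  edge relation E on V.\<close>

definition P4_ends :: "'a set \<Rightarrow> ('a \<Rightarrow> 'a \<Rightarrow> bool) \<Rightarrow> 'a \<Rightarrow> 'a \<Rightarrow> bool" where
  "P4_ends V E u v \<longleftrightarrow> (\<exists>x y. u \<in> V \<and> x \<in> V \<and> y \<in> V \<and> v \<in> V \<and>
      distinct [u, x, y, v] \<and> E u x \<and> E x y \<and> E y v)"

definition e_injective_coloring :: "'a set \<Rightarrow> ('a \<Rightarrow> 'a \<Rightarrow> bool) \<Rightarrow> nat \<Rightarrow> ('a \<Rightarrow> nat) \<Rightarrow> bool" where
  "e_injective_coloring V E k f \<longleftrightarrow> (\<forall>v\<in>V. f v \<in> {1..k}) \<and>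
      (\<forall>u v. P4_ends V E u v \<longrightarrow> f u \<noteq> f v)"

definition chi_ei :: "'a set \<Rightarrow> ('a \<Rightarrow> 'a \<Rightarrow> bool) \<Rightarrow> nat" where
  "chi_ei V E = (LEAST k. \<exists>f. e_injective_coloring V E k f)"

text \<open>Complete multipartite graph K_{n_1,...,n_r} with part sizes ns = [n_1,...,n_r]:
  vertices (i,j) with i < r, j < n_i; adjacent iff in different parts.\<close>

definition cmp_V :: "nat list \<Rightarrow> (nat \<times> nat) set" where
  "cmp_V ns = {(i, j). i < length ns \<and> j < ns ! i}"

definition cmp_E :: "nat list \<Rightarrow> nat \<times> nat \<Rightarrow> nat \<times> nat \<Rightarrow> bool" where
  "cmp_E ns p q \<longleftrightarrow> p \<in> cmp_V ns \<and> q \<in> cmp_V ns \<and> fst p \<noteq> fst q"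

end

(* Two distinct vertices of K_{n_1,...,n_r}, r >= 3, are the ends of a P4 through vertices of
   the other parts, except when r = 3 and they are the vertices of two different singleton
   parts. So the P4-end relation is complete apart from the set T of vertices in singleton
   parts (for r = 3): T can share one colour, while every other vertex needs a colour of its
   own, which gives n - |T| + 1 colours if T is nonempty and n otherwise. *)

theory Submission
  imports Defs
begin

lemma card_le_of_e_injective_coloring:
  assumes f: "e_injective_coloring V E k f" and "W \<subseteq> V"
    and clique: "\<And>p q. p \<in> W \<Longrightarrow> q \<in> W \<Longrightarrow> p \<noteq> q \<Longrightarrow> P4_ends V E p q"
  shows "card W \<le> k"
proof -
  have "inj_on f W"
    using f clique unfolding e_injective_coloring_def inj_on_def by blast
  moreover have "f ` W \<subseteq> {1..k}"
    using f \<open>W \<subseteq> V\<close> unfolding e_injective_coloring_def by auto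
  ultimately have "card W \<le> card {1..k}"
    by (intro card_inj_on_le) auto
  then show ?thesis by simp
qed

lemma e_injective_coloring_through_map:
  assumes "finite W" and hV: "h ` V \<subseteq> W"
    and h: "\<And>p q. P4_ends V E p q \<Longrightarrow> h p \<noteq> h q"
  shows "\<exists>f. e_injective_coloring V E (card W) f"
proof -
  obtain g where g: "bij_betw g W {1..card W}"
    using finite_same_card_bij[OF \<open>finite W\<close>, of "{1..card W}"] by auto
  have "e_injective_coloring V E (card W) (g \<circ> h)"
    unfolding e_injective_coloring_def
  proof (intro conjI allI impI ballI)
    fix v assume "v \<in> V"
    then show "(g \<circ> h) v \<in> {1..card W}"
      using hV g bij_betwE by fastforce
  next
    fix u v assume uv: "P4_ends V E u v"
    then have "h u \<in> W" "h v \<in> W"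
      using hV unfolding P4_ends_def by auto
    with h[OF uv] g show "(g \<circ> h) u \<noteq> (g \<circ> h) v"
      by (auto simp: bij_betw_def inj_on_def)
  qed
  then show ?thesis by blast
qed

lemma chi_ei_eq_card:
  assumes "finite W" "W \<subseteq> V" "h ` V \<subseteq> W"
    and "\<And>p q. p \<in> W \<Longrightarrow> q \<in> W \<Longrightarrow> p \<noteq> q \<Longrightarrow> P4_ends V E p q"
    and "\<And>p q. P4_ends V E p q \<Longrightarrow> h p \<noteq> h q"
  shows "chi_ei V E = card W"
  unfolding chi_ei_def
proof (rule Least_equality)
  show "\<exists>f. e_injective_coloring V E (card W) f"
    using assms by (intro e_injective_coloring_through_map)
  show "card W \<le> k" if "\<exists>f. e_injective_coloring V E k f" for k
    using that assms card_le_of_e_injective_coloring by metis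
qed

text \<open>The truncated subtraction makes the formula cover \<open>T = {}\<close> as well.\<close>

lemma chi_ei_eq_card_diff:
  assumes "finite V" "T \<subseteq> V"
    and P4: "\<And>p q. p \<in> V \<Longrightarrow> q \<in> V \<Longrightarrow> P4_ends V E p q \<longleftrightarrow> p \<noteq> q \<and> \<not> (p \<in> T \<and> q \<in> T)"
  shows "chi_ei V E = card V - (card T - 1)"
proof -
  define t where "t = (SOME t. t \<in> T)"
  define h where "h p = (if p \<in> T then t else p)" for p
  have t: "t \<in> T" if "T \<noteq> {}"
    using that unfolding t_def by (simp add: some_in_eq)
  have P4_V: "p \<in> V" "q \<in> V" if "P4_ends V E p q" for p q
    using that unfolding P4_ends_def by auto
  have "chi_ei V E = card (V - (T - {t}))"
  proof (rule chi_ei_eq_card)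
    show "h ` V \<subseteq> V - (T - {t})"
      using t \<open>T \<subseteq> V\<close> unfolding h_def by auto
    show "P4_ends V E p q" if "p \<in> V - (T - {t})" "q \<in> V - (T - {t})" "p \<noteq> q" for p q
      using that P4 by auto
    show "h p \<noteq> h q" if "P4_ends V E p q" for p q
      using that P4[OF P4_V[OF that]] t unfolding h_def by auto
  qed (use \<open>finite V\<close> in auto)
  also have "\<dots> = card V - card (T - {t})"
    using \<open>finite V\<close> \<open>T \<subseteq> V\<close> by (intro card_Diff_subset) (auto intro: finite_subset)
  also have "card (T - {t}) = card T - 1"
    using t by (cases "T = {}") (auto simp: card_Diff_singleton_if)
  finally show ?thesis .
qed

lemma cmp_V_eq_Sigma: "cmp_V ns = Sigma {..<length ns} (\<lambda>i. {..<ns ! i})"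
  unfolding cmp_V_def by auto

lemma finite_cmp_V: "finite (cmp_V ns)"
  by (simp add: cmp_V_eq_Sigma)

lemma card_cmp_V: "card (cmp_V ns) = sum_list ns"
  by (simp add: cmp_V_eq_Sigma sum_list_sum_nth atLeast0LessThan)

lemma cmp_V_singleton_part:
  assumes "p \<in> cmp_V ns" "q \<in> cmp_V ns" "fst p = fst q" "ns ! fst p = 1"
  shows "p = q"
  using assms unfolding cmp_V_def by (auto simp: prod_eq_iff)

lemma cmp_V_first_vertex:
  assumes "\<forall>i < length ns. ns ! i \<ge> 1" "i < length ns"
  shows "(i, 0) \<in> cmp_V ns"
  using assms unfolding cmp_V_def by force

lemma P4_ends_cmpI:
  assumes "x \<in> cmp_V ns" "y \<in> cmp_V ns" "p \<in> cmp_V ns" "q \<in> cmp_V ns"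
    "distinct [p, x, y, q]" "fst p \<noteq> fst x" "fst x \<noteq> fst y" "fst y \<noteq> fst q"
  shows "P4_ends (cmp_V ns) (cmp_E ns) p q"
  using assms unfolding P4_ends_def cmp_E_def by blast

text \<open>The inner vertices of such a path avoid both singleton parts, so with only
  three parts they would lie in the same part.\<close>

lemma not_P4_ends_cmp_singleton_parts:
  assumes "length ns = 3" "ns ! fst p = 1" "ns ! fst q = 1"
  shows "\<not> P4_ends (cmp_V ns) (cmp_E ns) p q"
proof
  assume "P4_ends (cmp_V ns) (cmp_E ns) p q"
  then obtain x y where V: "p \<in> cmp_V ns" "x \<in> cmp_V ns" "y \<in> cmp_V ns" "q \<in> cmp_V ns"
    and dist: "distinct [p, x, y, q]"
    and parts: "fst p \<noteq> fst x" "fst x \<noteq> fst y" "fst y \<noteq> fst q"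
    unfolding P4_ends_def cmp_E_def by auto
  have "fst p \<noteq> fst q" "fst x \<noteq> fst q" "fst y \<noteq> fst p"
    using cmp_V_singleton_part[of p ns q] cmp_V_singleton_part[of x ns q]
      cmp_V_singleton_part[of y ns p] V dist assms by auto
  moreover have "fst p < 3" "fst q < 3" "fst x < 3" "fst y < 3"
    using V assms(1) unfolding cmp_V_def by auto
  ultimately show False
    using parts by linarith
qed

lemma P4_ends_cmp_other_vertices:
  assumes len: "length ns \<ge> 3" and pos: "\<forall>i < length ns. ns ! i \<ge> 1"
    and p: "p \<in> cmp_V ns" and q: "q \<in> cmp_V ns" and "p \<noteq> q"
    and not_singletons: "\<not> (length ns = 3 \<and> ns ! fst p = 1 \<and> ns ! fst q = 1)"
  shows "P4_ends (cmp_V ns) (cmp_E ns) p q"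
proof -
  obtain a b c d where pab: "p = (a, b)" and qcd: "q = (c, d)"
    by (cases p, cases q)
  have ab: "a < length ns" "b < ns ! a" "c < length ns" "d < ns ! c"
    using p q unfolding pab qcd cmp_V_def by auto
  note first = cmp_V_first_vertex[OF pos]
  consider (two_free_parts) j k where "j < length ns" "k < length ns" "j \<noteq> k"
      "j \<noteq> a" "k \<noteq> a" "j \<noteq> c" "k \<noteq> c"
    | (big_part) "a \<noteq> c" "ns ! a \<ge> 2 \<or> ns ! c \<ge> 2"
  proof (cases "a = c \<or> length ns \<ge> 4")
    case True
    then have "\<exists>j k. j < length ns \<and> k < length ns \<and> j \<noteq> k \<and> j \<noteq> a \<and> k \<noteq> a \<and> j \<noteq> c \<and> k \<noteq> c"
      using len by (elim disjE; presburger)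
    then show ?thesis using that(1) by blast
  next
    case False
    with len have "length ns = 3" "a \<noteq> c" by auto
    moreover have "ns ! a \<ge> 1" "ns ! c \<ge> 1"
      using pos ab by auto
    ultimately show ?thesis
      using that(2) not_singletons unfolding pab qcd by fastforce
  qed
  then show ?thesis
  proof cases
    case two_free_parts
    then show ?thesis
      using P4_ends_cmpI[of "(j, 0)" ns "(k, 0)" p q] first p q \<open>p \<noteq> q\<close> unfolding pab qcd by auto
  next
    case big_part
    have "\<exists>j < 3. j \<noteq> a \<and> j \<noteq> c"
      by presburger
    with len obtain j where j: "j < length ns" "j \<noteq> a" "j \<noteq> c"
      by (meson less_le_trans)
    show ?thesis
    proof (cases "ns ! a \<ge> 2")
      case True
      then have "(a, if b = 0 then 1 else 0) \<in> cmp_V ns"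
        using ab unfolding cmp_V_def by auto
      then show ?thesis
        using P4_ends_cmpI[of "(j, 0)" ns "(a, if b = 0 then 1 else 0)" p q] first j big_part p q
        unfolding pab qcd by auto
    next
      case False
      then have "(c, if d = 0 then 1 else 0) \<in> cmp_V ns"
        using ab big_part unfolding cmp_V_def by auto
      then show ?thesis
        using P4_ends_cmpI[of "(c, if d = 0 then 1 else 0)" ns "(j, 0)" p q] first j big_part p q
        unfolding pab qcd by auto
    qed
  qed
qed

lemma P4_ends_cmp_iff:
  assumes "length ns \<ge> 3" "\<forall>i < length ns. ns ! i \<ge> 1" "p \<in> cmp_V ns" "q \<in> cmp_V ns"
  shows "P4_ends (cmp_V ns) (cmp_E ns) p q \<longleftrightarrow>
    p \<noteq> q \<and> \<not> (length ns = 3 \<and> ns ! fst p = 1 \<and> ns ! fst q = 1)"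
proof
  assume "P4_ends (cmp_V ns) (cmp_E ns) p q"
  moreover have "p \<noteq> q" if "P4_ends (cmp_V ns) (cmp_E ns) p q"
    using that unfolding P4_ends_def by auto
  ultimately show "p \<noteq> q \<and> \<not> (length ns = 3 \<and> ns ! fst p = 1 \<and> ns ! fst q = 1)"
    using not_P4_ends_cmp_singleton_parts by blast
qed (use assms P4_ends_cmp_other_vertices in blast)

lemma card_singleton_part_vertices:
  "card {p \<in> cmp_V ns. ns ! fst p = 1} = count_list ns 1"
proof -
  have "{p \<in> cmp_V ns. ns ! fst p = 1} = (\<lambda>i. (i, 0)) ` {i. i < length ns \<and> 1 = ns ! i}"
    unfolding cmp_V_def by force
  then have "card {p \<in> cmp_V ns. ns ! fst p = 1} = card {i. i < length ns \<and> 1 = ns ! i}"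
    by (simp add: card_image inj_on_def)
  then show ?thesis
    by (simp add: count_list_eq_length_filter length_filter_conv_card)
qed

lemma chi_ei_cmp_three_parts:
  assumes "length ns = 3" "\<forall>i < length ns. ns ! i \<ge> 1"
  shows "chi_ei (cmp_V ns) (cmp_E ns) = sum_list ns - (count_list ns 1 - 1)"
proof -
  have "chi_ei (cmp_V ns) (cmp_E ns) =
      card (cmp_V ns) - (card {p \<in> cmp_V ns. ns ! fst p = 1} - 1)"
    using assms by (intro chi_ei_eq_card_diff finite_cmp_V) (auto simp: P4_ends_cmp_iff)
  then show ?thesis
    by (simp only: card_cmp_V card_singleton_part_vertices)
qed

lemma chi_ei_cmp_many_parts:
  assumes "length ns \<ge> 4" "\<forall>i < length ns. ns ! i \<ge> 1"
  shows "chi_ei (cmp_V ns) (cmp_E ns) = sum_list ns"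
proof -
  have "chi_ei (cmp_V ns) (cmp_E ns) = card (cmp_V ns) - (card ({} :: (nat \<times> nat) set) - 1)"
    using assms by (intro chi_ei_eq_card_diff finite_cmp_V) (auto simp: P4_ends_cmp_iff)
  then show ?thesis
    by (simp add: card_cmp_V)
qed

theorem proposition3p7:
  fixes ns :: "nat list" and n :: nat
  assumes "length ns \<ge> 3"
    and "\<forall>i < length ns. ns ! i \<ge> 1"
    and "n = sum_list ns"
  shows "chi_ei (cmp_V ns) (cmp_E ns) =
    (if ns = [1, 1, 1] then 1
     else if length ns = 3 \<and> n \<ge> 4 \<and>
             ns \<in> {[n - 2, 1, 1], [1, n - 2, 1], [1, 1, n - 2]} then n - 1
     else n)"
proof (cases "length ns = 3")
  case True
  then obtain x y z where ns: "ns = [x, y, z]"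
    by (auto simp: length_Suc_conv numeral_3_eq_3)
  have "x \<ge> 1" "y \<ge> 1" "z \<ge> 1"
    using assms(2) unfolding ns by (auto dest: spec[of _ 0] spec[of _ 1] spec[of _ 2])
  then show ?thesis
    using chi_ei_cmp_three_parts[OF True assms(2)] assms(3) unfolding ns by auto
next
  case False
  then show ?thesis
    using chi_ei_cmp_many_parts assms by auto
qed

end
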